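(* Consider a sequence of two-class classification problems indexed by the sample size $n$ (the dimension $p$, the means $\mu_1,\mu_2\in\mathbb{R}^p$, the covariance matrix $\Sigma$ and the regularization parameter $c$ may all depend on $n$). Let $\mu_d=(\mu_1-\mu_2)/2$, $\mu_a=(\mu_1+\mu_2)/2$, and let $\epsilon>0$ be a constant (not depending on $n$) such that $\max_j|\mu_{dj}|>\epsilon$ and $$c>\epsilon+\frac{1}{\max_j|\mu_{dj}|}.$$ Let $\hat\mu_1,\hat\mu_2,\hat\Sigma$ be estimators of $\mu_1,\mu_2,\Sigma$ based on training data of size $n$, and let $a_n\to0$ be a sequence such that $\|\hat\Sigma-\Sigma\|_\infty=O_p(a_n)$ and $\|\hat\mu_i-\mu_i\|_\infty=O_p(a_n)$ for $i=1,2$. Let $$w_c=\operatorname{argmin}_{\|w\|_1\le c,\ w^T\mu_d=1} w^T\Sigma w,\qquad \hat w_c=\operatorname{argmin}_{\|w\|_1\le c,\ w^T\hat\mu_d=1} w^T\hat\Sigma w,$$ where $\hat\mu_d=(\hat\mu_1-\hat\mu_2)/2$, $\hat\mu_a=(\hat\mu_1+\hat\mu_2)/2$, and consider the oracle rule $\delta_{w_c}(x)=1+1(w_c^T(x-\mu_a)<0)$ and the ROAD rule $\hat\delta(x)=1+1(\hat w_c^T(x-\hat\mu_a)<0)$. Then, as $n\to\infty$, $$W(\hat\delta)-W(\delta_{w_c})=O_p(d_n),\qquad d_n=c^2a_n\bigl(1+c^2\|\Sigma\|_\infty\bigr).$$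
   Context: A new observation $X\in\mathbb{R}^p$ belongs to group 1 or group 2 with probability $\tfrac12$ each, and given group $i$ it is distributed as $N_p(\mu_i,\Sigma)$. A classification rule $\delta$ assigns $x$ to group $\delta(x)\in\{1,2\}$; $1(\cdot)$ denotes the indicator function. $W(\delta)$ denotes the misclassification rate of $\delta$, i.e. the probability (over the new observation $X$ and its group label, with the training data, and hence $\hat\mu_1,\hat\mu_2,\hat\Sigma,\hat w_c$, held fixed) that $\delta(X)$ differs from the true group of $X$. For a vector $v$, $\|v\|_1=\sum_j|v_j|$ and $\|v\|_\infty=\max_j|v_j|$; for a matrix $A$, $\|A\|_\infty=\max_{j,k}|A_{jk}|$ (maximal absolute entry). $\mu_{dj}$ is the $j$-th coordinate of $\mu_d$. The minimizer $\hat w_c$ is taken on the event that its feasible set is nonempty. *)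

theory Defs
  imports "HOL-Probability.Probability"
begin

(* Vectors in R^p are functions nat => real, only coordinates j < p matter.
   p x p matrices are functions nat => nat => real, only entries j,k < p matter. *)

definition vinf :: "nat \<Rightarrow> (nat \<Rightarrow> real) \<Rightarrow> real" where
  "vinf p v = Max (insert 0 ((\<lambda>j. \<bar>v j\<bar>) ` {..<p}))"

definition vl1 :: "nat \<Rightarrow> (nat \<Rightarrow> real) \<Rightarrow> real" where
  "vl1 p v = (\<Sum>j<p. \<bar>v j\<bar>)"

definition minf :: "nat \<Rightarrow> (nat \<Rightarrow> nat \<Rightarrow> real) \<Rightarrow> real" where
  "minf p A = Max (insert 0 ((\<lambda>(j,k). \<bar>A j k\<bar>) ` ({..<p} \<times> {..<p})))"

definition dotp :: "nat \<Rightarrow> (nat \<Rightarrow> real) \<Rightarrow> (nat \<Rightarrow> real) \<Rightarrow> real" where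
  "dotp p v w = (\<Sum>j<p. v j * w j)"

definition quadf :: "nat \<Rightarrow> (nat \<Rightarrow> nat \<Rightarrow> real) \<Rightarrow> (nat \<Rightarrow> real) \<Rightarrow> real" where
  "quadf p A w = (\<Sum>j<p. \<Sum>k<p. w j * A j k * w k)"

definition posdef :: "nat \<Rightarrow> (nat \<Rightarrow> nat \<Rightarrow> real) \<Rightarrow> bool" where
  "posdef p A \<longleftrightarrow> (\<forall>j<p. \<forall>k<p. A j k = A k j) \<and>
     (\<forall>v. (\<exists>j<p. v j \<noteq> 0) \<longrightarrow> quadf p A v > 0)"

definition feas :: "nat \<Rightarrow> real \<Rightarrow> (nat \<Rightarrow> real) \<Rightarrow> (nat \<Rightarrow> real) set" where
  "feas p c mu = {w. (\<forall>j\<ge>p. w j = 0) \<and> vl1 p w \<le> c \<and> dotp p w mu = 1}"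

definition is_minimizer :: "nat \<Rightarrow> real \<Rightarrow> (nat \<Rightarrow> real) \<Rightarrow> (nat \<Rightarrow> nat \<Rightarrow> real)
    \<Rightarrow> (nat \<Rightarrow> real) \<Rightarrow> bool" where
  "is_minimizer p c mu A w \<longleftrightarrow> w \<in> feas p c mu \<and> (\<forall>v\<in>feas p c mu. quadf p A w \<le> quadf p A v)"

(* N is the multivariate normal distribution N_p(mu, S) on R^p (Cramer-Wold definition:
   every linear functional w^T X is univariate normal N(w^T mu, w^T S w),
   a point mass when the variance is 0). *)
definition mvnormal :: "nat \<Rightarrow> (nat \<Rightarrow> real) \<Rightarrow> (nat \<Rightarrow> nat \<Rightarrow> real) \<Rightarrow> (nat \<Rightarrow> real) measure \<Rightarrow> bool" where
  "mvnormal p mu S N \<longleftrightarrow> prob_space N \<and> sets N = sets (PiM {..<p} (\<lambda>_. borel)) \<and>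
     (\<forall>w. distr N borel (\<lambda>x. dotp p w x) =
        (if quadf p S w = 0 then return borel (dotp p w mu)
         else density lborel (normal_density (dotp p w mu) (sqrt (quadf p S w)))))"

definition linrule :: "nat \<Rightarrow> (nat \<Rightarrow> real) \<Rightarrow> (nat \<Rightarrow> real) \<Rightarrow> (nat \<Rightarrow> real) \<Rightarrow> nat" where
  "linrule p w m x = 1 + (if dotp p w (\<lambda>j. x j - m j) < 0 then 1 else 0)"

definition misrate :: "(nat \<Rightarrow> real) measure \<Rightarrow> (nat \<Rightarrow> real) measure \<Rightarrow> ((nat \<Rightarrow> real) \<Rightarrow> nat) \<Rightarrow> real" where
  "misrate P1 P2 \<delta> = 1/2 * measure P1 {x \<in> space P1. \<delta> x \<noteq> 1} + 1/2 * measure P2 {x \<in> space P2. \<delta> x \<noteq> 2}"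

(* X_n = O_p(r_n), in (outer) probability, X_n defined on probability space M n *)
definition bigOp :: "(nat \<Rightarrow> 'w measure) \<Rightarrow> (nat \<Rightarrow> 'w \<Rightarrow> real) \<Rightarrow> (nat \<Rightarrow> real) \<Rightarrow> bool" where
  "bigOp M X r \<longleftrightarrow> (\<forall>e>0. \<exists>K. \<exists>N. \<forall>n\<ge>N. \<exists>A\<in>sets (M n).
      {\<omega> \<in> space (M n). \<bar>X n \<omega>\<bar> > K * r n} \<subseteq> A \<and> measure (M n) A \<le> e)"

end

theory Submission
  imports Defs
begin

text \<open>
  Under two Gaussian classes with common covariance \<open>\<Sigma>\<close>, the error rate of a linear rule is
  \<open>\<Phi>\<close> evaluated at its two offsets \<open>w\<^sup>T(\<mu>\<^sub>i - m)\<close> divided by \<open>\<surd>(w\<^sup>T\<Sigma>w)\<close>. For the oracle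
  rule both offsets are \<open>1\<close>; for the ROAD rule they differ from \<open>1\<close> by at most \<open>c\<close> times the mean
  estimation error, since \<open>\<parallel>\<hat>w\<^sub>c\<parallel>\<^sub>1 \<le> c\<close>. The variances \<open>w\<^sup>T\<Sigma>w\<close> of the two rules are the optimal
  values of two \<open>\<ell>\<^sub>1\<close>-constrained quadratic programmes, and these are close: a feasible point of
  one programme becomes feasible for the other after shrinking it slightly and correcting along a
  coordinate where \<open>|\<mu>\<^sub>d\<^sub>j|\<close> is maximal (the margin \<open>c > \<epsilon> + 1/max\<^sub>j|\<mu>\<^sub>d\<^sub>j|\<close> pays for the
  correction), and on the \<open>\<ell>\<^sub>1\<close>-ball of radius \<open>c\<close> the quadratic forms of \<open>\<Sigma>\<close> and \<open>\<hat>\<Sigma>\<close> differ by at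
  most \<open>c\<^sup>2\<parallel>\<hat>\<Sigma> - \<Sigma>\<parallel>\<^sub>\<infinity>\<close>. As \<open>\<Phi>(-1/s)\<close> is Lipschitz in \<open>s\<^sup>2\<close>, the error rates differ by
  \<open>O(c\<^sup>2\<eta>(1 + c\<^sup>2\<parallel>\<Sigma>\<parallel>\<^sub>\<infinity>))\<close> whenever all estimation errors are at most a small \<open>\<eta>\<close>;
  this deterministic bound turns into the stated stochastic order.
\<close>

section \<open>The standard normal distribution function\<close>

abbreviation std_normal :: "real measure" where
  "std_normal \<equiv> density lborel (\<lambda>x. ennreal (std_normal_density x))"

abbreviation Phi :: "real \<Rightarrow> real" where
  "Phi \<equiv> cdf std_normal"

lemma real_distribution_std_normal: "real_distribution std_normal"
proof -
  interpret prob_space std_normal by (rule prob_space_normal_density) simp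
  show ?thesis by unfold_locales simp
qed

interpretation std_normal: real_distribution std_normal
  by (rule real_distribution_std_normal)

lemma std_normal_singleton: "measure std_normal {z} = 0"
proof -
  have "emeasure std_normal {z} = (\<integral>\<^sup>+ x. ennreal (std_normal_density x) * indicator {z} x \<partial>lborel)"
    by (rule emeasure_density) auto
  also have "\<dots> = 0"
    by (simp add: nn_integral_indicator_singleton)
  finally show ?thesis by (simp add: measure_def)
qed

lemma std_normal_lessThan: "measure std_normal {..<z} = Phi z"
proof -
  have "measure std_normal ({..<z} \<union> {z}) = measure std_normal {..<z} + measure std_normal {z}"
    by (intro std_normal.finite_measure_Union) auto
  moreover have "{..<z} \<union> {z} = {..z}" by auto
  ultimately show ?thesis by (simp add: cdf_def std_normal_singleton)
qed

lemma distr_normal_density_standardize: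
  assumes "\<sigma> > 0" "\<alpha> \<noteq> 0" "\<beta> + \<alpha> * \<mu> = 0" "\<bar>\<alpha>\<bar> * \<sigma> = 1"
  shows "distr (density lborel (normal_density \<mu> \<sigma>)) lborel (\<lambda>x. \<beta> + \<alpha> * x) = std_normal"
proof -
  let ?N = "density lborel (normal_density \<mu> \<sigma>)"
  interpret prob_space ?N by (rule prob_space_normal_density) (rule assms(1))
  have "distributed ?N lborel (\<lambda>x. x) (normal_density \<mu> \<sigma>)"
    unfolding distributed_def by (simp add: distr_id2)
  from normal_density_affine[OF this assms(1,2), of \<beta>]
  show ?thesis using assms(3,4) by (simp add: distributed_def)
qed

lemma measure_normal_lessThan:
  assumes "\<sigma> > 0"
  shows "measure (density lborel (normal_density \<mu> \<sigma>)) {..<t} = Phi ((t - \<mu>) / \<sigma>)"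
proof -
  let ?N = "density lborel (normal_density \<mu> \<sigma>)"
  let ?f = "\<lambda>x. - \<mu> / \<sigma> + (1 / \<sigma>) * x"
  have std: "distr ?N lborel ?f = std_normal"
    by (rule distr_normal_density_standardize) (use assms in \<open>auto simp: field_simps\<close>)
  have "measure std_normal {..<(t - \<mu>) / \<sigma>} = measure ?N (?f -` {..<(t - \<mu>) / \<sigma>} \<inter> space ?N)"
    unfolding std[symmetric] by (rule measure_distr) auto
  also have "?f -` {..<(t - \<mu>) / \<sigma>} \<inter> space ?N = {..<t}"
    using assms by (auto simp: field_simps)
  finally show ?thesis by (simp add: std_normal_lessThan)
qed

lemma measure_normal_atLeast:
  assumes "\<sigma> > 0"
  shows "measure (density lborel (normal_density \<mu> \<sigma>)) {t..} = Phi ((\<mu> - t) / \<sigma>)"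
proof -
  let ?N = "density lborel (normal_density \<mu> \<sigma>)"
  let ?f = "\<lambda>x. \<mu> / \<sigma> + (- 1 / \<sigma>) * x"
  have std: "distr ?N lborel ?f = std_normal"
    by (rule distr_normal_density_standardize) (use assms in \<open>auto simp: field_simps\<close>)
  have "measure std_normal {..(\<mu> - t) / \<sigma>} = measure ?N (?f -` {..(\<mu> - t) / \<sigma>} \<inter> space ?N)"
    unfolding std[symmetric] by (rule measure_distr) auto
  also have "?f -` {..(\<mu> - t) / \<sigma>} \<inter> space ?N = {t..}"
    using assms by (auto simp: field_simps)
  finally show ?thesis by (simp add: cdf_def)
qed

lemma measure_std_normal_le:
  assumes "A \<in> sets borel" "\<And>x. x \<in> A \<Longrightarrow> std_normal_density x \<le> f x"
    and "integrable lborel (\<lambda>x. f x * indicator A x)" "\<And>x. f x \<ge> 0"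
  shows "measure std_normal A \<le> (\<integral>x. f x * indicator A x \<partial>lborel)"
proof -
  have "emeasure std_normal A = (\<integral>\<^sup>+ x. ennreal (std_normal_density x) * indicator A x \<partial>lborel)"
    by (rule emeasure_density) (use assms in auto)
  also have "\<dots> \<le> (\<integral>\<^sup>+ x. ennreal (f x * indicator A x) \<partial>lborel)"
    by (intro nn_integral_mono) (use assms(2) in \<open>auto simp: ennreal_leI indicator_def\<close>)
  also have "\<dots> = ennreal (\<integral>x. f x * indicator A x \<partial>lborel)"
    by (rule nn_integral_eq_integral) (use assms(3,4) in auto)
  finally show ?thesis
    by (simp add: std_normal.emeasure_eq_measure integral_nonneg_AE assms(4) ennreal_le_iff)
qed

lemma Phi_diff_le:
  assumes "a \<le> b" "b \<le> 0"
  shows "Phi b - Phi a \<le> (b - a) * exp (- b\<^sup>2 / 2)"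
proof (cases "a = b")
  case False
  have density_le: "std_normal_density x \<le> exp (- b\<^sup>2 / 2)" if "x \<in> {a<..b}" for x
  proof -
    have "\<bar>b\<bar> \<le> \<bar>x\<bar>" using that assms by auto
    then have "exp (- x\<^sup>2 / 2) \<le> exp (- b\<^sup>2 / 2)" by (simp add: abs_le_square_iff)
    moreover have "1 / sqrt (2 * pi) \<le> 1" using pi_gt3 by simp
    ultimately have "1 / sqrt (2 * pi) * exp (- x\<^sup>2 / 2) \<le> 1 * exp (- b\<^sup>2 / 2)"
      by (intro mult_mono) auto
    then show ?thesis by (simp add: std_normal_density_def)
  qed
  have "Phi b - Phi a = measure std_normal {a<..b}"
    using False assms by (intro std_normal.cdf_diff_eq) auto
  also have "\<dots> \<le> (\<integral>x. exp (- b\<^sup>2 / 2) * indicator {a<..b} x \<partial>lborel)"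
    by (rule measure_std_normal_le) (use density_le assms in \<open>auto simp: integrable_indicator_iff\<close>)
  also have "\<dots> = (b - a) * exp (- b\<^sup>2 / 2)"
    using assms by simp
  finally show ?thesis .
qed simp

lemma Phi_le_inverse_square:
  assumes "b < 0"
  shows "Phi b \<le> 1 / b\<^sup>2"
proof -
  have second_moment: "has_bochner_integral lborel (\<lambda>x. std_normal_density x * x\<^sup>2) 1"
    using std_normal_moment_even[of 1] by simp
  have int: "integrable lborel (\<lambda>x. std_normal_density x * x\<^sup>2 / b\<^sup>2)"
    using second_moment by (intro integrable_divide) (simp add: has_bochner_integral_iff)
  have int_b: "integrable lborel (\<lambda>x. std_normal_density x * x\<^sup>2 / b\<^sup>2 * indicator {..b} x)"
    by (rule integrable_real_mult_indicator[OF _ int]) simp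
  have "Phi b = measure std_normal {..b}" by (simp add: cdf_def)
  also have "\<dots> \<le> (\<integral>x. std_normal_density x * x\<^sup>2 / b\<^sup>2 * indicator {..b} x \<partial>lborel)"
  proof (rule measure_std_normal_le[OF _ _ int_b])
    fix x assume "x \<in> {..b}"
    then have "\<bar>b\<bar> \<le> \<bar>x\<bar>" using assms by auto
    then have "b\<^sup>2 \<le> x\<^sup>2" by (simp add: abs_le_square_iff)
    then show "std_normal_density x \<le> std_normal_density x * x\<^sup>2 / b\<^sup>2"
      using assms by (simp add: le_divide_eq mult_left_mono)
  qed (auto intro!: divide_nonneg_nonneg mult_nonneg_nonneg normal_density_nonneg)
  also have "\<dots> \<le> (\<integral>x. std_normal_density x * x\<^sup>2 / b\<^sup>2 \<partial>lborel)"
    using int int_b by (intro integral_mono) (auto simp: indicator_def normal_density_nonneg)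
  also have "\<dots> = 1 / b\<^sup>2"
    using has_bochner_integral_integral_eq[OF second_moment] by simp
  finally show ?thesis .
qed

lemma exp_neg_inverse_square_le:
  fixes r :: real
  assumes "r > 0"
  shows "exp (- (1 / r)\<^sup>2 / 2) \<le> 2 * r ^ 3"
proof -
  define y where "y = 1 / r"
  have y: "y > 0" using assms by (simp add: y_def)
  have "y ^ 3 \<le> 2 * (1 + y\<^sup>2 / 2 + (y\<^sup>2 / 2)\<^sup>2 / 2)"
  proof -
    have "0 \<le> (y - y\<^sup>2 / 2)\<^sup>2" by simp
    then show ?thesis by (simp add: power2_eq_square power3_eq_cube algebra_simps)
  qed
  also have "\<dots> \<le> 2 * exp (y\<^sup>2 / 2)"
    using exp_lower_Taylor_quadratic[of "y\<^sup>2 / 2"] by simp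
  finally have "exp (- y\<^sup>2 / 2) \<le> 2 / y ^ 3"
    using y by (simp add: exp_minus field_simps)
  then show ?thesis using assms by (simp add: y_def field_simps)
qed

lemma Phi_neg_inverse_diff_le:
  assumes "0 < s" "s \<le> r"
  shows "Phi (- 1 / r) - Phi (- 1 / s) \<le> 4 * (r\<^sup>2 - s\<^sup>2)"
proof (cases "r \<le> 2 * s")
  case True
  have r: "r > 0" using assms by simp
  have "Phi (- 1 / r) - Phi (- 1 / s) \<le> ((- 1 / r) - (- 1 / s)) * exp (- (- 1 / r)\<^sup>2 / 2)"
    by (rule Phi_diff_le) (use assms in \<open>auto simp: field_simps\<close>)
  also have "\<dots> = ((r - s) / (r * s)) * exp (- (1 / r)\<^sup>2 / 2)"
    using assms by (simp add: field_simps power2_eq_square)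
  also have "\<dots> \<le> ((r - s) / (r * s)) * (2 * r ^ 3)"
    by (rule mult_left_mono[OF exp_neg_inverse_square_le[OF r]]) (use assms in auto)
  also have "\<dots> = 2 * (r - s) * r * (r / s)"
    using assms by (simp add: field_simps power3_eq_cube)
  also have "\<dots> \<le> 2 * (r - s) * r * 2"
    by (rule mult_left_mono) (use True assms in \<open>auto simp: field_simps\<close>)
  also have "\<dots> \<le> 4 * (r\<^sup>2 - s\<^sup>2)"
    using assms by (simp add: power2_eq_square algebra_simps mult_right_mono)
  finally show ?thesis .
next
  case False
  \<comment> \<open>far apart, the Chebyshev tail bound on \<open>Phi (- 1 / r)\<close> alone suffices\<close>
  have "Phi (- 1 / r) \<le> r\<^sup>2"
    using Phi_le_inverse_square[of "- 1 / r"] assms by (simp add: power2_eq_square)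
  moreover have "4 * s\<^sup>2 \<le> r\<^sup>2"
    using power_mono[of "2 * s" r 2] False assms by (simp add: power_mult_distrib)
  ultimately show ?thesis using std_normal.cdf_nonneg[of "- 1 / s"] zero_le_power2[of r]
    by (smt (verit))
qed

lemma abs_Phi_neg_inverse_diff_le:
  assumes "0 < s" "0 < r"
  shows "\<bar>Phi (- 1 / s) - Phi (- 1 / r)\<bar> \<le> 4 * \<bar>s\<^sup>2 - r\<^sup>2\<bar>"
proof -
  have *: "\<bar>Phi (- 1 / s) - Phi (- 1 / r)\<bar> \<le> 4 * \<bar>s\<^sup>2 - r\<^sup>2\<bar>" if "0 < s" "s \<le> r" for s r
  proof -
    have "Phi (- 1 / s) \<le> Phi (- 1 / r)"
      by (rule std_normal.cdf_nondecreasing) (use that in \<open>simp add: field_simps\<close>)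
    moreover have "s\<^sup>2 \<le> r\<^sup>2" using that by (intro power_mono) auto
    ultimately show ?thesis using Phi_neg_inverse_diff_le[OF that] by simp
  qed
  show ?thesis
    using *[of s r] *[of r s] assms by (cases "s \<le> r") (auto simp: abs_minus_commute)
qed

lemma abs_divide_square_diff_le:
  fixes x q q0 h :: real
  assumes x: "\<bar>x - 1\<bar> \<le> h" and h: "h \<le> 1 / 4" and q0: "q0 \<ge> 0"
  shows "\<bar>q / x\<^sup>2 - q0\<bar> \<le> 2 * \<bar>q - q0\<bar> + 4 * h * q0"
proof -
  have x1: "x \<ge> 3 / 4" "x \<le> 5 / 4" using x h by auto
  have x2: "x\<^sup>2 \<ge> 9 / 16"
    using power_mono[OF x1(1), of 2] by (simp add: power2_eq_square)
  have "q / x\<^sup>2 - q0 = (q - q0) / x\<^sup>2 + q0 * ((1 - x) * (1 + x) / x\<^sup>2)"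
    using x1 by (simp add: field_simps power2_eq_square)
  then have "\<bar>q / x\<^sup>2 - q0\<bar> \<le> \<bar>q - q0\<bar> / x\<^sup>2 + q0 * (\<bar>1 - x\<bar> * (1 + x) / x\<^sup>2)"
    using q0 x1 by (simp add: abs_mult abs_div abs_triangle_ineq[THEN order_trans])
  also have "\<dots> \<le> 2 * \<bar>q - q0\<bar> + q0 * (h * (9 / 4) / (9 / 16))"
  proof (intro add_mono mult_left_mono frac_le q0)
    have "\<bar>q - q0\<bar> * 1 \<le> \<bar>q - q0\<bar> * (2 * x\<^sup>2)"
      using x2 by (intro mult_left_mono) auto
    then show "\<bar>q - q0\<bar> / x\<^sup>2 \<le> 2 * \<bar>q - q0\<bar>"
      using x2 by (simp add: divide_le_eq ac_simps)
    show "\<bar>1 - x\<bar> * (1 + x) \<le> h * (9 / 4)"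
      using x x1 by (intro mult_mono) (auto simp: abs_minus_commute)
  qed (use x x2 in auto)
  finally show ?thesis by (simp add: ac_simps)
qed

lemma abs_Phi_ratio_diff_le:
  assumes x: "\<bar>x - 1\<bar> \<le> h" and h: "h \<le> 1 / 4" and "q > 0" "q0 > 0"
  shows "\<bar>Phi (- x / sqrt q) - Phi (- 1 / sqrt q0)\<bar> \<le> 4 * (2 * \<bar>q - q0\<bar> + 4 * h * q0)"
proof -
  have "x > 0" using x h by auto
  define s where "s = sqrt q / x"
  have s: "s > 0" "- x / sqrt q = - 1 / s" "s\<^sup>2 = q / x\<^sup>2"
    using \<open>x > 0\<close> \<open>q > 0\<close> by (auto simp: s_def field_simps power_divide)
  have "\<bar>Phi (- x / sqrt q) - Phi (- 1 / sqrt q0)\<bar> \<le> 4 * \<bar>s\<^sup>2 - (sqrt q0)\<^sup>2\<bar>"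
    unfolding s(2) by (rule abs_Phi_neg_inverse_diff_le) (use s \<open>q0 > 0\<close> in auto)
  also have "\<dots> = 4 * \<bar>q / x\<^sup>2 - q0\<bar>" using \<open>q0 > 0\<close> by (simp add: s(3))
  also have "\<dots> \<le> 4 * (2 * \<bar>q - q0\<bar> + 4 * h * q0)"
    using abs_divide_square_diff_le[OF x h, of q0 q] \<open>q0 > 0\<close> by simp
  finally show ?thesis .
qed

lemma abs_le_vinf: "j < p \<Longrightarrow> \<bar>v j\<bar> \<le> vinf p v"
  unfolding vinf_def by (rule Max_ge) auto

lemma vinf_attained:
  assumes "vinf p v > 0"
  obtains j where "j < p" "\<bar>v j\<bar> = vinf p v"
proof -
  have "vinf p v \<in> insert 0 ((\<lambda>j. \<bar>v j\<bar>) ` {..<p})"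
    unfolding vinf_def by (rule Max_in) auto
  with assms that show ?thesis by auto
qed

lemma abs_le_minf: "j < p \<Longrightarrow> k < p \<Longrightarrow> \<bar>A j k\<bar> \<le> minf p A"
  unfolding minf_def by (rule Max_ge) force+

lemma minf_nonneg: "0 \<le> minf p A"
  unfolding minf_def by (rule Max_ge[THEN order_trans[rotated]]) auto

lemma vl1_nonneg: "0 \<le> vl1 p v"
  unfolding vl1_def by (simp add: sum_nonneg)

lemma vl1_lincomb_le: "vl1 p (\<lambda>i. t * x i + r * y i) \<le> \<bar>t\<bar> * vl1 p x + \<bar>r\<bar> * vl1 p y"
proof -
  have "vl1 p (\<lambda>i. t * x i + r * y i) \<le> (\<Sum>j<p. \<bar>t\<bar> * \<bar>x j\<bar> + \<bar>r\<bar> * \<bar>y j\<bar>)"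
    unfolding vl1_def
    by (rule sum_mono) (auto simp: abs_mult[symmetric] intro: abs_triangle_ineq[THEN order_trans])
  also have "\<dots> = \<bar>t\<bar> * vl1 p x + \<bar>r\<bar> * vl1 p y"
    by (simp add: vl1_def sum.distrib sum_distrib_left)
  finally show ?thesis .
qed

lemma dotp_lincomb: "dotp p (\<lambda>i. t * x i + r * y i) m = t * dotp p x m + r * dotp p y m"
  unfolding dotp_def by (simp add: sum.distrib sum_distrib_left algebra_simps)

lemma dotp_diff: "dotp p w (\<lambda>j. x j - y j) = dotp p w x - dotp p w y"
  by (simp add: dotp_def right_diff_distrib sum_subtractf)

lemma abs_dotp_le:
  assumes "\<And>j. j < p \<Longrightarrow> \<bar>x j\<bar> \<le> B"
  shows "\<bar>dotp p w x\<bar> \<le> vl1 p w * B"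
proof -
  have "\<bar>dotp p w x\<bar> \<le> (\<Sum>j<p. \<bar>w j * x j\<bar>)"
    unfolding dotp_def by (rule sum_abs)
  also have "\<dots> \<le> (\<Sum>j<p. \<bar>w j\<bar> * B)"
    by (rule sum_mono) (use assms in \<open>auto simp: abs_mult intro: mult_left_mono\<close>)
  finally show ?thesis by (simp add: vl1_def sum_distrib_right)
qed

lemma abs_dotp_perturb_le:
  assumes "dotp p w m = 1" "vl1 p w \<le> c" "\<And>j. j < p \<Longrightarrow> \<bar>d j\<bar> \<le> \<eta>" "0 \<le> \<eta>"
  shows "\<bar>dotp p w (\<lambda>j. m j + d j) - 1\<bar> \<le> c * \<eta>"
proof -
  have "dotp p w (\<lambda>j. m j + d j) = 1 + dotp p w d"
    using assms(1) by (simp add: dotp_def distrib_left sum.distrib)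
  then show ?thesis
    using abs_dotp_le[of p d \<eta> w, OF assms(3)] mult_right_mono[OF assms(2,4)] by simp
qed

lemma vl1_scaled_unit: "j < p \<Longrightarrow> vl1 p (\<lambda>i. if i = j then x else 0) = \<bar>x\<bar>"
  unfolding vl1_def by (simp add: if_distrib cong: if_cong)

lemma dotp_scaled_unit:
  assumes "j < p" "m j \<noteq> 0"
  shows "dotp p (\<lambda>i. if i = j then 1 / m j else 0) m = 1"
proof -
  have "dotp p (\<lambda>i. if i = j then 1 / m j else 0) m = (\<Sum>i<p. if i = j then 1 else 0)"
    unfolding dotp_def by (rule sum.cong) (use assms(2) in auto)
  then show ?thesis using assms(1) by simp
qed

definition bilf :: "nat \<Rightarrow> (nat \<Rightarrow> nat \<Rightarrow> real) \<Rightarrow> (nat \<Rightarrow> real) \<Rightarrow> (nat \<Rightarrow> real) \<Rightarrow> real" where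
  "bilf p A x y = (\<Sum>j<p. \<Sum>k<p. x j * A j k * y k)"

lemma abs_bilf_le:
  assumes "\<And>j k. j < p \<Longrightarrow> k < p \<Longrightarrow> \<bar>A j k\<bar> \<le> S"
  shows "\<bar>bilf p A x y\<bar> \<le> vl1 p x * vl1 p y * S"
proof -
  have "\<bar>bilf p A x y\<bar> \<le> (\<Sum>j<p. \<Sum>k<p. \<bar>x j * A j k * y k\<bar>)"
    unfolding bilf_def by (rule order_trans[OF sum_abs sum_mono[OF sum_abs]])
  also have "\<dots> \<le> (\<Sum>j<p. \<Sum>k<p. \<bar>x j\<bar> * \<bar>y k\<bar> * S)"
  proof (intro sum_mono)
    fix j k assume "j \<in> {..<p}" "k \<in> {..<p}"
    then have "\<bar>x j\<bar> * \<bar>A j k\<bar> * \<bar>y k\<bar> \<le> \<bar>x j\<bar> * S * \<bar>y k\<bar>"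
      using assms by (intro mult_right_mono mult_left_mono) auto
    then show "\<bar>x j * A j k * y k\<bar> \<le> \<bar>x j\<bar> * \<bar>y k\<bar> * S"
      by (simp add: abs_mult ac_simps)
  qed
  also have "\<dots> = (\<Sum>j<p. \<Sum>k<p. \<bar>x j\<bar> * \<bar>y k\<bar>) * S"
    by (simp add: sum_distrib_right)
  also have "\<dots> = vl1 p x * vl1 p y * S"
    by (simp add: vl1_def sum_product)
  finally show ?thesis .
qed

lemma abs_quadf_le:
  assumes "\<And>j k. j < p \<Longrightarrow> k < p \<Longrightarrow> \<bar>A j k\<bar> \<le> S"
  shows "\<bar>quadf p A x\<bar> \<le> (vl1 p x)\<^sup>2 * S"
  using abs_bilf_le[OF assms, where x=x and y=x] by (simp add: quadf_def bilf_def power2_eq_square)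

lemma abs_quadf_le_radius:
  assumes "\<And>j k. j < p \<Longrightarrow> k < p \<Longrightarrow> \<bar>A j k\<bar> \<le> S" "0 \<le> S" "vl1 p x \<le> c"
  shows "\<bar>quadf p A x\<bar> \<le> c\<^sup>2 * S"
proof -
  have "\<bar>quadf p A x\<bar> \<le> (vl1 p x)\<^sup>2 * S" using assms(1) by (rule abs_quadf_le)
  also have "\<dots> \<le> c\<^sup>2 * S"
    using assms(2,3) vl1_nonneg[of p x] by (intro mult_right_mono power_mono) auto
  finally show ?thesis .
qed

lemma quadf_lincomb:
  "quadf p A (\<lambda>i. t * x i + r * y i) =
     t\<^sup>2 * quadf p A x + t * r * (bilf p A x y + bilf p A y x) + r\<^sup>2 * quadf p A y"
  unfolding quadf_def bilf_def
  by (simp add: sum.distrib sum_distrib_left algebra_simps power2_eq_square)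

lemma quadf_diff: "quadf p A w - quadf p B w = quadf p (\<lambda>j k. A j k - B j k) w"
  unfolding quadf_def by (simp add: sum_subtractf algebra_simps)

lemma posdef_quadf_nonneg:
  assumes "posdef p A"
  shows "quadf p A v \<ge> 0"
proof (cases "\<exists>j<p. v j \<noteq> 0")
  case True
  then show ?thesis using assms unfolding posdef_def by force
qed (simp add: quadf_def)

lemma posdef_quadf_pos:
  assumes "posdef p A" "dotp p w m = 1"
  shows "quadf p A w > 0"
proof -
  have "\<exists>j<p. w j \<noteq> 0"
    using assms(2) by (rule contrapos_pp) (simp add: dotp_def)
  then show ?thesis using assms(1) unfolding posdef_def by blast
qed

section \<open>Error rates of linear rules\<close>

lemma measurable_dotp: "(\<lambda>x. dotp p w x) \<in> borel_measurable (PiM {..<p} (\<lambda>_. borel))"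
  unfolding dotp_def by measurable

lemma mvnormal_dotp:
  assumes "mvnormal p \<mu> S N" "quadf p S w > 0"
  shows "distr N borel (\<lambda>x. dotp p w x) =
           density lborel (normal_density (dotp p w \<mu>) (sqrt (quadf p S w)))"
    and "(\<lambda>x. dotp p w x) \<in> borel_measurable N"
proof -
  show "distr N borel (\<lambda>x. dotp p w x) =
          density lborel (normal_density (dotp p w \<mu>) (sqrt (quadf p S w)))"
    using assms unfolding mvnormal_def by auto
  have "sets N = sets (PiM {..<p} (\<lambda>_. borel))"
    using assms(1) unfolding mvnormal_def by auto
  then show "(\<lambda>x. dotp p w x) \<in> borel_measurable N"
    using measurable_dotp measurable_cong_sets by blast
qed

lemma measure_mvnormal_dotp_less:
  assumes "mvnormal p \<mu> S N" "quadf p S w > 0"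
  shows "measure N {x \<in> space N. dotp p w x < t} = Phi ((t - dotp p w \<mu>) / sqrt (quadf p S w))"
proof -
  note distr = mvnormal_dotp[OF assms]
  have "{x \<in> space N. dotp p w x < t} = (\<lambda>x. dotp p w x) -` {..<t} \<inter> space N" by auto
  then have "measure N {x \<in> space N. dotp p w x < t} = measure (distr N borel (\<lambda>x. dotp p w x)) {..<t}"
    using measure_distr[OF distr(2), of "{..<t}"] by simp
  then show ?thesis
    unfolding distr(1) using measure_normal_lessThan assms(2) by simp
qed

lemma measure_mvnormal_dotp_ge:
  assumes "mvnormal p \<mu> S N" "quadf p S w > 0"
  shows "measure N {x \<in> space N. \<not> dotp p w x < t} = Phi ((dotp p w \<mu> - t) / sqrt (quadf p S w))"
proof -
  note distr = mvnormal_dotp[OF assms]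
  have "{x \<in> space N. \<not> dotp p w x < t} = (\<lambda>x. dotp p w x) -` {t..} \<inter> space N" by auto
  then have "measure N {x \<in> space N. \<not> dotp p w x < t} = measure (distr N borel (\<lambda>x. dotp p w x)) {t..}"
    using measure_distr[OF distr(2), of "{t..}"] by simp
  then show ?thesis
    unfolding distr(1) using measure_normal_atLeast assms(2) by simp
qed

lemma misrate_linrule:
  assumes "mvnormal p \<mu>1 S P1" "mvnormal p \<mu>2 S P2" "quadf p S w > 0"
  shows "misrate P1 P2 (linrule p w m) =
           1/2 * Phi (- dotp p w (\<lambda>j. \<mu>1 j - m j) / sqrt (quadf p S w))
         + 1/2 * Phi (- dotp p w (\<lambda>j. m j - \<mu>2 j) / sqrt (quadf p S w))"
proof -
  have "{x \<in> space P1. linrule p w m x \<noteq> 1} = {x \<in> space P1. dotp p w x < dotp p w m}"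
    and "{x \<in> space P2. linrule p w m x \<noteq> 2} = {x \<in> space P2. \<not> dotp p w x < dotp p w m}"
    by (auto simp: linrule_def dotp_diff)
  then show ?thesis
    unfolding misrate_def
    by (simp add: measure_mvnormal_dotp_less[OF assms(1,3)] measure_mvnormal_dotp_ge[OF assms(2,3)] dotp_diff)
qed

lemma misrate_nonneg_le_one:
  assumes "prob_space P1" "prob_space P2"
  shows "0 \<le> misrate P1 P2 \<delta> \<and> misrate P1 P2 \<delta> \<le> 1"
  using prob_space.prob_le_1[OF assms(1), of "{x \<in> space P1. \<delta> x \<noteq> 1}"]
    prob_space.prob_le_1[OF assms(2), of "{x \<in> space P2. \<delta> x \<noteq> 2}"]
    measure_nonneg[of P1 "{x \<in> space P1. \<delta> x \<noteq> 1}"] measure_nonneg[of P2 "{x \<in> space P2. \<delta> x \<noteq> 2}"]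
  unfolding misrate_def by linarith

lemma abs_misrate_linrule_diff_le:
  assumes N1: "mvnormal p \<mu>1 S P1" and N2: "mvnormal p \<mu>2 S P2"
    and w: "dotp p w (\<lambda>j. (\<mu>1 j - \<mu>2 j) / 2) = 1" "quadf p S w > 0"
    and w': "\<bar>dotp p w' (\<lambda>j. \<mu>1 j - m' j) - 1\<bar> \<le> h" "\<bar>dotp p w' (\<lambda>j. m' j - \<mu>2 j) - 1\<bar> \<le> h"
      "quadf p S w' > 0"
    and h: "h \<le> 1 / 4"
  shows "\<bar>misrate P1 P2 (linrule p w' m') - misrate P1 P2 (linrule p w (\<lambda>j. (\<mu>1 j + \<mu>2 j) / 2))\<bar>
           \<le> 8 * \<bar>quadf p S w' - quadf p S w\<bar> + 16 * h * quadf p S w"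
proof -
  have "(\<lambda>j. \<mu>1 j - (\<mu>1 j + \<mu>2 j) / 2) = (\<lambda>j. (\<mu>1 j - \<mu>2 j) / 2)"
    and "(\<lambda>j. (\<mu>1 j + \<mu>2 j) / 2 - \<mu>2 j) = (\<lambda>j. (\<mu>1 j - \<mu>2 j) / 2)"
    by (auto simp: field_simps)
  then have misrate_w: "misrate P1 P2 (linrule p w (\<lambda>j. (\<mu>1 j + \<mu>2 j) / 2)) =
      1/2 * Phi (- 1 / sqrt (quadf p S w)) + 1/2 * Phi (- 1 / sqrt (quadf p S w))"
    by (simp add: misrate_linrule[OF N1 N2 w(2)] w(1))
  show ?thesis
    unfolding misrate_w misrate_linrule[OF N1 N2 w'(3)]
    using abs_Phi_ratio_diff_le[OF w'(1) h w'(3) w(2)] abs_Phi_ratio_diff_le[OF w'(2) h w'(3) w(2)]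
    by (simp add: abs_le_iff)
qed

section \<open>Perturbation of the constrained minimizer\<close>

lemma quadf_lincomb_le:
  assumes S: "\<And>j k. j < p \<Longrightarrow> k < p \<Longrightarrow> \<bar>A j k\<bar> \<le> S" "0 \<le> S"
    and t: "0 \<le> t" "t \<le> 1" and r: "\<bar>r\<bar> \<le> 2"
    and x: "vl1 p x \<le> c" "quadf p A x \<ge> 0" and y: "vl1 p y \<le> c"
  shows "quadf p A (\<lambda>i. t * x i + r * y i) \<le> quadf p A x + 4 * \<bar>r\<bar> * c\<^sup>2 * S"
proof -
  have c: "vl1 p x * vl1 p y \<le> c * c"
    using x y vl1_nonneg[of p x] vl1_nonneg[of p y] by (auto intro: mult_mono)
  have B: "\<And>u v. \<bar>bilf p A u v\<bar> \<le> vl1 p u * vl1 p v * S"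
    using S(1) by (rule abs_bilf_le)
  have "\<bar>bilf p A x y + bilf p A y x\<bar> \<le> 2 * (c\<^sup>2 * S)"
    using B[of x y] B[of y x] mult_right_mono[OF c(1) S(2)]
    by (simp add: power2_eq_square ac_simps)
  then have "\<bar>t * r * (bilf p A x y + bilf p A y x)\<bar> \<le> 1 * \<bar>r\<bar> * (2 * (c\<^sup>2 * S))"
    unfolding abs_mult using t by (intro mult_mono) auto
  then have "t * r * (bilf p A x y + bilf p A y x) \<le> \<bar>r\<bar> * (2 * (c\<^sup>2 * S))"
    by simp
  moreover have "r\<^sup>2 * quadf p A y \<le> (\<bar>r\<bar> * 2) * (c\<^sup>2 * S)"
  proof -
    have "quadf p A y \<le> c\<^sup>2 * S"
      using abs_quadf_le_radius[of p A S, OF S y] by simp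
    then have "r\<^sup>2 * quadf p A y \<le> r\<^sup>2 * (c\<^sup>2 * S)"
      by (rule mult_left_mono) simp
    also have "\<dots> \<le> (\<bar>r\<bar> * 2) * (c\<^sup>2 * S)"
      using mult_left_mono[OF r, of "\<bar>r\<bar>"] S(2) by (intro mult_right_mono) (auto simp: power2_eq_square)
    finally show ?thesis .
  qed
  moreover have "t\<^sup>2 * quadf p A x \<le> quadf p A x"
    using x(2) t by (simp add: mult_left_le_one_le power_le_one)
  ultimately show ?thesis
    unfolding quadf_lincomb by (simp add: algebra_simps)
qed

lemma feas_transfer:
  assumes w: "w \<in> feas p c m"
    and m': "\<And>i. i < p \<Longrightarrow> \<bar>m' i - m i\<bar> \<le> \<eta>"
    and j: "j < p" "m' j \<noteq> 0" "1 / \<bar>m' j\<bar> \<le> c - \<gamma>"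
    and \<gamma>: "\<gamma> > 0" "c\<^sup>2 * \<eta> \<le> \<gamma>" and \<eta>: "c * \<eta> \<le> 1" "\<eta> \<ge> 0"
    and S: "\<And>i k. i < p \<Longrightarrow> k < p \<Longrightarrow> \<bar>A i k\<bar> \<le> S"
    and "quadf p A w \<ge> 0"
  obtains v where "v \<in> feas p c m'"
    and "quadf p A v \<le> quadf p A w + 4 * (c\<^sup>2 * \<eta> / \<gamma> + c * \<eta>) * c\<^sup>2 * S"
proof -
  have wz: "\<And>i. i \<ge> p \<Longrightarrow> w i = 0" and wl: "vl1 p w \<le> c" and wm: "dotp p w m = 1"
    using w by (auto simp: feas_def)
  have "0 < 1 / \<bar>m' j\<bar>" using j(2) by simp
  then have c: "c > 0" "c - \<gamma> > 0" using j(3) \<gamma>(1) by linarith+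
  define \<alpha> where "\<alpha> = dotp p w m'"
  have \<alpha>: "\<bar>\<alpha> - 1\<bar> \<le> c * \<eta>"
    using abs_dotp_perturb_le[OF wm wl _ \<eta>(2), of "\<lambda>i. m' i - m i"] m' by (simp add: \<alpha>_def)
  \<comment> \<open>Shrink \<open>w\<close> by the factor \<open>t\<close> to free \<open>\<ell>\<^sub>1\<close>-budget, then restore the constraint along coordinate \<open>j\<close>.\<close>
  define \<delta> where "\<delta> = c\<^sup>2 * \<eta> / \<gamma>"
  define t where "t = 1 - \<delta>"
  define r where "r = 1 - t * \<alpha>"
  define e where "e = (\<lambda>i. if i = j then 1 / m' j else 0)"
  define v where "v = (\<lambda>i. t * w i + r * e i)"
  have \<delta>: "0 \<le> \<delta>" "\<delta> \<le> 1" using \<gamma> \<eta>(2) by (auto simp: \<delta>_def)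
  have t: "0 \<le> t" "t \<le> 1" using \<delta> by (auto simp: t_def)
  have "r = \<delta> + t * (1 - \<alpha>)" by (simp add: r_def t_def algebra_simps)
  then have "\<bar>r\<bar> \<le> \<delta> + t * \<bar>\<alpha> - 1\<bar>"
    using \<delta> t by (simp add: abs_mult abs_minus_commute abs_triangle_ineq[THEN order_trans])
  also have "\<dots> \<le> \<delta> + c * \<eta>"
    using mult_mono[OF t(2) \<alpha>] t(1) by simp
  finally have r: "\<bar>r\<bar> \<le> \<delta> + c * \<eta>" .
  have el: "vl1 p e = 1 / \<bar>m' j\<bar>" and em: "dotp p e m' = 1"
    using vl1_scaled_unit[OF j(1)] dotp_scaled_unit[of j p m', OF j(1,2)] by (simp_all add: e_def)
  have "\<bar>t\<bar> * vl1 p w \<le> t * c" using t wl by (simp add: mult_left_mono)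
  moreover have "\<bar>r\<bar> * vl1 p e \<le> (\<delta> + c * \<eta>) * (c - \<gamma>)"
    using r el j(3) by (intro mult_mono) (auto simp: vl1_nonneg)
  ultimately have "vl1 p v \<le> t * c + (\<delta> + c * \<eta>) * (c - \<gamma>)"
    using vl1_lincomb_le[of p t w r e] unfolding v_def by linarith
  also have "\<dots> = c - c * \<eta> * \<gamma>"
    using \<gamma>(1) by (simp add: t_def \<delta>_def field_simps power2_eq_square)
  also have "\<dots> \<le> c" using c \<eta>(2) \<gamma>(1) by simp
  finally have "vl1 p v \<le> c" .
  moreover have "dotp p v m' = 1"
    unfolding v_def dotp_lincomb em \<alpha>_def[symmetric] r_def by simp
  moreover have "\<forall>i\<ge>p. v i = 0"
    using wz j(1) by (auto simp: v_def e_def)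
  ultimately have "v \<in> feas p c m'" by (simp add: feas_def)
  moreover have "quadf p A v \<le> quadf p A w + 4 * \<bar>r\<bar> * c\<^sup>2 * S"
    unfolding v_def
  proof (rule quadf_lincomb_le[OF S _ t _ wl \<open>quadf p A w \<ge> 0\<close>])
    show "0 \<le> S" using S[OF j(1) j(1)] by linarith
    show "\<bar>r\<bar> \<le> 2" using r \<delta> \<eta>(1) by linarith
    show "vl1 p e \<le> c" using el j(3) \<gamma>(1) by linarith
  qed
  moreover have "4 * \<bar>r\<bar> * c\<^sup>2 * S \<le> 4 * (\<delta> + c * \<eta>) * c\<^sup>2 * S"
    using r S[OF j(1) j(1)] by (intro mult_right_mono) auto
  ultimately show ?thesis using that by (auto simp: \<delta>_def)
qed

lemma is_minimizer_value_perturbation: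
  assumes w: "is_minimizer p c m A w"
    and w': "feas p c m' \<noteq> {} \<Longrightarrow> is_minimizer p c m' A' w'"
    and m': "\<And>i. i < p \<Longrightarrow> \<bar>m' i - m i\<bar> \<le> \<eta>"
    and A': "\<And>j k. j < p \<Longrightarrow> k < p \<Longrightarrow> \<bar>A' j k - A j k\<bar> \<le> \<eta>"
    and j: "j < p" "m j \<noteq> 0" "m' j \<noteq> 0" "1 / \<bar>m j\<bar> \<le> c - \<gamma>" "1 / \<bar>m' j\<bar> \<le> c - \<gamma>"
    and \<gamma>: "\<gamma> > 0" "c\<^sup>2 * \<eta> \<le> \<gamma>" and \<eta>: "c * \<eta> \<le> 1" "\<eta> \<ge> 0"
    and S: "\<And>i k. i < p \<Longrightarrow> k < p \<Longrightarrow> \<bar>A i k\<bar> \<le> S"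
    and A: "posdef p A"
  shows "is_minimizer p c m' A' w'"
    and "\<bar>quadf p A w' - quadf p A w\<bar> \<le> 4 * (c\<^sup>2 * \<eta> / \<gamma> + c * \<eta>) * c\<^sup>2 * S + 2 * c\<^sup>2 * \<eta>"
proof -
  define D where "D = 4 * (c\<^sup>2 * \<eta> / \<gamma> + c * \<eta>) * c\<^sup>2 * S"
  have m: "\<And>i. i < p \<Longrightarrow> \<bar>m i - m' i\<bar> \<le> \<eta>"
    using m' by (simp add: abs_minus_commute)
  have wf: "w \<in> feas p c m" using w by (simp add: is_minimizer_def)
  obtain v where v: "v \<in> feas p c m'" "quadf p A v \<le> quadf p A w + D"
    using feas_transfer[OF wf m' j(1,3,5) \<gamma> \<eta> S posdef_quadf_nonneg[OF A]] unfolding D_def .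
  then show w'_min: "is_minimizer p c m' A' w'" using w' by blast
  have w'f: "w' \<in> feas p c m'" using w'_min by (simp add: is_minimizer_def)
  obtain u where u: "u \<in> feas p c m" "quadf p A u \<le> quadf p A w' + D"
    using feas_transfer[OF w'f m j(1,2,4) \<gamma> \<eta> S posdef_quadf_nonneg[OF A]] unfolding D_def .
  have pert: "\<bar>quadf p A' x - quadf p A x\<bar> \<le> c\<^sup>2 * \<eta>" if "x \<in> feas p c m'" for x
    using abs_quadf_le_radius[of p "\<lambda>j k. A' j k - A j k" \<eta> x c] that A' \<eta>(2)
    by (simp add: quadf_diff feas_def)
  have "quadf p A w' \<le> quadf p A' w' + c\<^sup>2 * \<eta>" using pert[OF w'f] by linarith
  also have "\<dots> \<le> quadf p A' v + c\<^sup>2 * \<eta>" using w'_min v(1) by (simp add: is_minimizer_def)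
  also have "\<dots> \<le> quadf p A v + 2 * c\<^sup>2 * \<eta>" using pert[OF v(1)] by linarith
  finally have "quadf p A w' \<le> quadf p A w + D + 2 * c\<^sup>2 * \<eta>" using v(2) by linarith
  moreover have "quadf p A w \<le> quadf p A w' + D"
    using w u by (auto simp: is_minimizer_def)
  ultimately show "\<bar>quadf p A w' - quadf p A w\<bar> \<le> D + 2 * c\<^sup>2 * \<eta>"
    using mult_nonneg_nonneg[OF zero_le_power2[of c] \<eta>(2)] by (simp add: abs_le_iff)
qed

lemma inverse_abs_perturb_le:
  fixes \<epsilon> v x \<eta> :: real
  assumes "\<epsilon> > 0" "v > \<epsilon>" "\<bar>x - v\<bar> \<le> \<eta>" "0 \<le> \<eta>" "\<eta> \<le> \<epsilon> / 2" "\<eta> \<le> \<epsilon> ^ 3 / 4"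
  shows "x \<noteq> 0" "1 / \<bar>x\<bar> \<le> 1 / v + \<epsilon> / 2"
proof -
  have x: "\<bar>x\<bar> \<ge> v - \<eta>" "v - \<eta> \<ge> \<epsilon> / 2" using assms by linarith+
  then show "x \<noteq> 0" using assms(1) by auto
  have "1 / \<bar>x\<bar> \<le> 1 / (v - \<eta>)" using x assms(1) by (intro divide_left_mono) auto
  also have "\<dots> = 1 / v + \<eta> / (v * (v - \<eta>))" using x assms(1,2) by (simp add: field_simps)
  also have "\<eta> / (v * (v - \<eta>)) \<le> \<eta> / (\<epsilon> * (\<epsilon> / 2))"
    using x assms by (intro divide_left_mono mult_mono) auto
  also have "\<dots> \<le> \<epsilon> / 2"
    using assms(1,6) by (simp add: divide_le_eq power3_eq_cube)
  finally show "1 / \<bar>x\<bar> \<le> 1 / v + \<epsilon> / 2" by simp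
qed

lemma large_coordinate:
  assumes \<epsilon>: "\<epsilon> > 0" "vinf p m > \<epsilon>" "c > \<epsilon> + 1 / vinf p m"
    and m': "\<And>i. i < p \<Longrightarrow> \<bar>m' i - m i\<bar> \<le> \<eta>" and \<eta>: "0 \<le> \<eta>" "\<eta> \<le> \<epsilon> / 2" "\<eta> \<le> \<epsilon> ^ 3 / 4"
  obtains j where "j < p" "m j \<noteq> 0" "m' j \<noteq> 0" "1 / \<bar>m j\<bar> \<le> c - \<epsilon> / 2" "1 / \<bar>m' j\<bar> \<le> c - \<epsilon> / 2"
proof -
  obtain j where j: "j < p" "\<bar>m j\<bar> = vinf p m"
    using vinf_attained[of p m] \<epsilon> by auto
  have "\<bar>\<bar>m' j\<bar> - vinf p m\<bar> \<le> \<eta>"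
    using m'[OF j(1)] j(2) by linarith
  from inverse_abs_perturb_le[OF \<epsilon>(1,2) this \<eta>] j \<epsilon> show ?thesis
    by (intro that[of j]) auto
qed

section \<open>Error rates under small estimation errors\<close>

lemma estimation_error_arith:
  fixes \<epsilon> c \<eta> S \<Delta> q :: real
  assumes "\<epsilon> > 0" "c \<ge> \<epsilon>" "\<eta> \<ge> 0" "S \<ge> 0" "q \<le> c\<^sup>2 * S"
    and "\<Delta> \<le> 4 * (c\<^sup>2 * \<eta> / (\<epsilon> / 2) + c * \<eta>) * c\<^sup>2 * S + 2 * c\<^sup>2 * \<eta>"
  shows "8 * \<Delta> + 16 * (c * \<eta>) * q \<le> (16 + 112 / \<epsilon>) * \<eta> * (c\<^sup>2 * (1 + c\<^sup>2 * S))"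
proof -
  have c: "c > 0" using assms(1,2) by linarith
  define U where "U = c ^ 4 * \<eta> * S / \<epsilon>"
  have U: "0 \<le> U" using assms(1,3,4) by (simp add: U_def)
  have cube: "c ^ 3 * \<eta> * S \<le> U"
    using mult_right_mono[OF assms(2), of "c ^ 3 * \<eta> * S"] assms(1,3,4) c
    by (simp add: U_def field_simps power_eq_if)
  have "\<Delta> \<le> 8 * U + 4 * (c ^ 3 * \<eta> * S) + 2 * (c\<^sup>2 * \<eta>)"
    using assms(1,6) by (simp add: U_def field_simps power_eq_if)
  moreover have "4 * (c * \<eta>) * q \<le> 4 * (c ^ 3 * \<eta> * S)"
    using mult_left_mono[OF assms(5), of "4 * (c * \<eta>)"] c assms(3) by (simp add: power_eq_if ac_simps)
  moreover have "0 \<le> c\<^sup>2 * \<eta> / \<epsilon>" "0 \<le> \<epsilon> * U"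
    using assms(1,3) U by simp_all
  ultimately have "8 * \<Delta> + 16 * (c * \<eta>) * q \<le>
      16 * (c\<^sup>2 * \<eta>) + 16 * (\<epsilon> * U) + 112 * (c\<^sup>2 * \<eta> / \<epsilon>) + 112 * U"
    using cube by linarith
  also have "\<dots> = (16 + 112 / \<epsilon>) * \<eta> * (c\<^sup>2 * (1 + c\<^sup>2 * S))"
    using assms(1) by (simp add: U_def field_simps power_eq_if)
  finally show ?thesis .
qed

lemma abs_misrate_diff_le_small_error:
  fixes \<mu>1 \<mu>2 \<mu>1' \<mu>2' :: "nat \<Rightarrow> real"
  defines "m \<equiv> \<lambda>j. (\<mu>1 j - \<mu>2 j) / 2" and "m' \<equiv> \<lambda>j. (\<mu>1' j - \<mu>2' j) / 2"
  assumes A: "posdef p A" and N1: "mvnormal p \<mu>1 A P1" and N2: "mvnormal p \<mu>2 A P2"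
    and \<epsilon>: "\<epsilon> > 0" "vinf p m > \<epsilon>" "c > \<epsilon> + 1 / vinf p m"
    and w: "is_minimizer p c m A w"
    and w': "feas p c m' \<noteq> {} \<Longrightarrow> is_minimizer p c m' A' w'"
    and \<eta>: "\<eta> \<ge> 0" "\<eta> \<le> \<epsilon> / 2" "\<eta> \<le> \<epsilon> ^ 3 / 4" "c\<^sup>2 * \<eta> \<le> \<epsilon> / 2" "c * \<eta> \<le> 1 / 4"
    and \<mu>1': "\<And>j. j < p \<Longrightarrow> \<bar>\<mu>1' j - \<mu>1 j\<bar> \<le> \<eta>"
    and \<mu>2': "\<And>j. j < p \<Longrightarrow> \<bar>\<mu>2' j - \<mu>2 j\<bar> \<le> \<eta>"
    and A': "\<And>j k. j < p \<Longrightarrow> k < p \<Longrightarrow> \<bar>A' j k - A j k\<bar> \<le> \<eta>"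
  shows "\<bar>misrate P1 P2 (linrule p w' (\<lambda>j. (\<mu>1' j + \<mu>2' j) / 2))
           - misrate P1 P2 (linrule p w (\<lambda>j. (\<mu>1 j + \<mu>2 j) / 2))\<bar>
         \<le> (16 + 112 / \<epsilon>) * \<eta> * (c\<^sup>2 * (1 + c\<^sup>2 * minf p A))"
proof -
  define S where "S = minf p A"
  have S: "\<And>j k. j < p \<Longrightarrow> k < p \<Longrightarrow> \<bar>A j k\<bar> \<le> S" "S \<ge> 0"
    by (simp_all add: S_def abs_le_minf minf_nonneg)
  have c: "c \<ge> \<epsilon>" using \<epsilon> by (smt (verit) divide_pos_pos)
  have m': "\<bar>m' j - m j\<bar> \<le> \<eta>" if "j < p" for j
    using \<mu>1'[OF that] \<mu>2'[OF that] by (simp add: m_def m'_def abs_le_iff field_simps)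
  obtain j where j: "j < p" "m j \<noteq> 0" "m' j \<noteq> 0" "1 / \<bar>m j\<bar> \<le> c - \<epsilon> / 2" "1 / \<bar>m' j\<bar> \<le> c - \<epsilon> / 2"
    using large_coordinate[OF \<epsilon> m' \<eta>(1-3)] by blast
  have "\<epsilon> / 2 > 0" using \<epsilon>(1) by simp
  note perturbation = is_minimizer_value_perturbation[OF w w' m' A' j this \<eta>(4) \<eta>(5)[THEN order_trans]
      \<eta>(1) S(1) A]
  have w'_min: "is_minimizer p c m' A' w'" and
    q: "\<bar>quadf p A w' - quadf p A w\<bar> \<le> 4 * (c\<^sup>2 * \<eta> / (\<epsilon> / 2) + c * \<eta>) * c\<^sup>2 * S + 2 * c\<^sup>2 * \<eta>"
    using perturbation by auto
  have wf: "vl1 p w \<le> c" "dotp p w m = 1" using w by (auto simp: is_minimizer_def feas_def)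
  have w'f: "vl1 p w' \<le> c" "dotp p w' m' = 1" using w'_min by (auto simp: is_minimizer_def feas_def)
  have "(\<lambda>j. \<mu>1 j - (\<mu>1' j + \<mu>2' j) / 2) = (\<lambda>j. m' j + (\<mu>1 j - \<mu>1' j))"
    and "(\<lambda>j. (\<mu>1' j + \<mu>2' j) / 2 - \<mu>2 j) = (\<lambda>j. m' j + (\<mu>2' j - \<mu>2 j))"
    by (auto simp: m'_def field_simps)
  then have "\<bar>dotp p w' (\<lambda>j. \<mu>1 j - (\<mu>1' j + \<mu>2' j) / 2) - 1\<bar> \<le> c * \<eta>"
    and "\<bar>dotp p w' (\<lambda>j. (\<mu>1' j + \<mu>2' j) / 2 - \<mu>2 j) - 1\<bar> \<le> c * \<eta>"
    using abs_dotp_perturb_le[OF w'f(2,1) _ \<eta>(1)] \<mu>1' \<mu>2' by (simp_all add: abs_minus_commute)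
  then have "\<bar>misrate P1 P2 (linrule p w' (\<lambda>j. (\<mu>1' j + \<mu>2' j) / 2))
           - misrate P1 P2 (linrule p w (\<lambda>j. (\<mu>1 j + \<mu>2 j) / 2))\<bar>
        \<le> 8 * \<bar>quadf p A w' - quadf p A w\<bar> + 16 * (c * \<eta>) * quadf p A w"
    by (rule abs_misrate_linrule_diff_le[OF N1 N2 wf(2)[unfolded m_def] posdef_quadf_pos[OF A wf(2)]
          _ _ posdef_quadf_pos[OF A w'f(2)] \<eta>(5)])
  also have "\<dots> \<le> (16 + 112 / \<epsilon>) * \<eta> * (c\<^sup>2 * (1 + c\<^sup>2 * S))"
    using abs_quadf_le_radius[of p A S, OF S wf(1)]
    by (intro estimation_error_arith[OF \<epsilon>(1) c \<eta>(1) S(2) _ q]) simp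
  finally show ?thesis by (simp add: S_def)
qed

lemma abs_misrate_diff_le:
  fixes \<mu>1 \<mu>2 \<mu>1' \<mu>2' :: "nat \<Rightarrow> real"
  assumes A: "posdef p A" and N1: "mvnormal p \<mu>1 A P1" and N2: "mvnormal p \<mu>2 A P2"
    and \<epsilon>: "\<epsilon> > 0" "vinf p (\<lambda>j. (\<mu>1 j - \<mu>2 j) / 2) > \<epsilon>"
      "c > \<epsilon> + 1 / vinf p (\<lambda>j. (\<mu>1 j - \<mu>2 j) / 2)"
    and w: "is_minimizer p c (\<lambda>j. (\<mu>1 j - \<mu>2 j) / 2) A w"
    and w': "feas p c (\<lambda>j. (\<mu>1' j - \<mu>2' j) / 2) \<noteq> {} \<Longrightarrow>
      is_minimizer p c (\<lambda>j. (\<mu>1' j - \<mu>2' j) / 2) A' w'"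
    and \<eta>: "\<eta> \<ge> 0" "\<eta> \<le> \<epsilon> / 2" "\<eta> \<le> \<epsilon> ^ 3 / 4"
    and \<mu>1': "\<And>j. j < p \<Longrightarrow> \<bar>\<mu>1' j - \<mu>1 j\<bar> \<le> \<eta>"
    and \<mu>2': "\<And>j. j < p \<Longrightarrow> \<bar>\<mu>2' j - \<mu>2 j\<bar> \<le> \<eta>"
    and A': "\<And>j k. j < p \<Longrightarrow> k < p \<Longrightarrow> \<bar>A' j k - A j k\<bar> \<le> \<eta>"
  shows "\<bar>misrate P1 P2 (linrule p w' (\<lambda>j. (\<mu>1' j + \<mu>2' j) / 2))
           - misrate P1 P2 (linrule p w (\<lambda>j. (\<mu>1 j + \<mu>2 j) / 2))\<bar>
         \<le> (16 + 112 / \<epsilon>) * \<eta> * (c\<^sup>2 * (1 + c\<^sup>2 * minf p A))"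
proof (cases "c\<^sup>2 * \<eta> \<le> \<epsilon> / 2 \<and> c * \<eta> \<le> 1 / 4")
  case True
  then show ?thesis
    using abs_misrate_diff_le_small_error[OF A N1 N2 \<epsilon> w w' \<eta>] \<mu>1' \<mu>2' A' by blast
next
  case False
  \<comment> \<open>then the right-hand side is at least \<open>1\<close>, which bounds any difference of two error rates\<close>
  have c: "c \<ge> \<epsilon>" using \<epsilon> by (smt (verit) divide_pos_pos)
  have "\<epsilon> / 4 \<le> c\<^sup>2 * \<eta>"
  proof (cases "c\<^sup>2 * \<eta> \<le> \<epsilon> / 2")
    case True
    then have "1 / 4 \<le> c * \<eta>" using False by auto
    then have "\<epsilon> * (1 / 4) \<le> c * (c * \<eta>)" using c \<epsilon>(1) by (intro mult_mono) auto
    then show ?thesis by (simp add: power2_eq_square)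
  qed (use \<epsilon>(1) in auto)
  then have "1 \<le> 4 / \<epsilon> * (c\<^sup>2 * \<eta>)" using \<epsilon>(1) by (simp add: field_simps)
  also have "\<dots> \<le> (16 + 112 / \<epsilon>) * (c\<^sup>2 * \<eta>)"
    using \<epsilon>(1) \<eta>(1) by (intro mult_right_mono) (auto simp: field_simps)
  also have "\<dots> \<le> (16 + 112 / \<epsilon>) * (\<eta> * (c\<^sup>2 * (1 + c\<^sup>2 * minf p A)))"
    using \<epsilon>(1) \<eta>(1) minf_nonneg[of p A] by (intro mult_left_mono) (auto simp: algebra_simps)
  finally have "1 \<le> (16 + 112 / \<epsilon>) * \<eta> * (c\<^sup>2 * (1 + c\<^sup>2 * minf p A))"
    by (simp add: mult.assoc)
  moreover have "prob_space P1" "prob_space P2" using N1 N2 by (simp_all add: mvnormal_def)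
  note misrate_bounds = misrate_nonneg_le_one[OF this]
  ultimately show ?thesis
    using misrate_bounds[of "linrule p w' (\<lambda>j. (\<mu>1' j + \<mu>2' j) / 2)"]
      misrate_bounds[of "linrule p w (\<lambda>j. (\<mu>1 j + \<mu>2 j) / 2)"]
    by linarith
qed

section \<open>Stochastic order\<close>

lemma bigOp_abs_add:
  assumes "bigOp M X r" "bigOp M Y r"
  shows "bigOp M (\<lambda>n \<omega>. \<bar>X n \<omega>\<bar> + \<bar>Y n \<omega>\<bar>) r"
  unfolding bigOp_def
proof (intro allI impI)
  fix e :: real assume "e > 0"
  then obtain K1 N1 K2 N2 where
    X: "\<forall>n\<ge>N1. \<exists>A\<in>sets (M n). {\<omega> \<in> space (M n). \<bar>X n \<omega>\<bar> > K1 * r n} \<subseteq> A \<and> measure (M n) A \<le> e / 2" and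
    Y: "\<forall>n\<ge>N2. \<exists>A\<in>sets (M n). {\<omega> \<in> space (M n). \<bar>Y n \<omega>\<bar> > K2 * r n} \<subseteq> A \<and> measure (M n) A \<le> e / 2"
    using assms unfolding bigOp_def by (meson half_gt_zero)
  show "\<exists>K N. \<forall>n\<ge>N. \<exists>A\<in>sets (M n).
      {\<omega> \<in> space (M n). \<bar>\<bar>X n \<omega>\<bar> + \<bar>Y n \<omega>\<bar>\<bar> > K * r n} \<subseteq> A \<and> measure (M n) A \<le> e"
  proof (intro exI allI impI)
    fix n assume "max N1 N2 \<le> n"
    then obtain A1 A2 where A: "A1 \<in> sets (M n)" "A2 \<in> sets (M n)"
      "{\<omega> \<in> space (M n). \<bar>X n \<omega>\<bar> > K1 * r n} \<subseteq> A1" "{\<omega> \<in> space (M n). \<bar>Y n \<omega>\<bar> > K2 * r n} \<subseteq> A2"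
      "measure (M n) A1 \<le> e / 2" "measure (M n) A2 \<le> e / 2"
      using X Y by (meson max.boundedE)
    have "{\<omega> \<in> space (M n). \<bar>\<bar>X n \<omega>\<bar> + \<bar>Y n \<omega>\<bar>\<bar> > (K1 + K2) * r n} \<subseteq> A1 \<union> A2"
    proof
      fix \<omega> assume "\<omega> \<in> {\<omega> \<in> space (M n). \<bar>\<bar>X n \<omega>\<bar> + \<bar>Y n \<omega>\<bar>\<bar> > (K1 + K2) * r n}"
      then have "\<omega> \<in> space (M n)" "\<bar>X n \<omega>\<bar> > K1 * r n \<or> \<bar>Y n \<omega>\<bar> > K2 * r n"
        by (auto simp: distrib_right)
      then show "\<omega> \<in> A1 \<union> A2" using A(3,4) by blast
    qed
    moreover have "measure (M n) (A1 \<union> A2) \<le> e"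
      using measure_Un_le[OF A(1,2)] A(5,6) by linarith
    ultimately show "\<exists>A\<in>sets (M n). {\<omega> \<in> space (M n). \<bar>\<bar>X n \<omega>\<bar> + \<bar>Y n \<omega>\<bar>\<bar> > (K1 + K2) * r n} \<subseteq> A
        \<and> measure (M n) A \<le> e"
      using A(1,2) by blast
  qed
qed

lemma bigOp_locally_linear:
  assumes X: "bigOp M X a" and a: "a \<longlonglongrightarrow> 0" "\<And>n. a n \<ge> 0"
    and "\<eta> > 0" "C \<ge> 0" "\<And>n. b n \<ge> 0"
    and Y: "\<And>n \<omega>. \<omega> \<in> space (M n) \<Longrightarrow> \<bar>X n \<omega>\<bar> \<le> \<eta> \<Longrightarrow> \<bar>Y n \<omega>\<bar> \<le> C * \<bar>X n \<omega>\<bar> * b n"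
  shows "bigOp M Y (\<lambda>n. a n * b n)"
  unfolding bigOp_def
proof (intro allI impI)
  fix e :: real assume "e > 0"
  then obtain K N where
    K: "\<forall>n\<ge>N. \<exists>A\<in>sets (M n). {\<omega> \<in> space (M n). \<bar>X n \<omega>\<bar> > K * a n} \<subseteq> A \<and> measure (M n) A \<le> e"
    using X unfolding bigOp_def by blast
  define K' where "K' = max K 0"
  have "(\<lambda>n. K' * a n) \<longlonglongrightarrow> K' * 0" by (intro tendsto_mult tendsto_const a(1))
  then have "eventually (\<lambda>n. K' * a n < \<eta>) sequentially"
    using \<open>\<eta> > 0\<close> by (simp add: order_tendstoD(2))
  then obtain N' where N': "\<And>n. n \<ge> N' \<Longrightarrow> K' * a n < \<eta>"
    by (auto simp: eventually_sequentially)
  show "\<exists>K N. \<forall>n\<ge>N. \<exists>A\<in>sets (M n). {\<omega> \<in> space (M n). \<bar>Y n \<omega>\<bar> > K * (a n * b n)} \<subseteq> A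
      \<and> measure (M n) A \<le> e"
  proof (intro exI allI impI)
    fix n assume n: "max N N' \<le> n"
    then obtain A where A: "A \<in> sets (M n)" "{\<omega> \<in> space (M n). \<bar>X n \<omega>\<bar> > K * a n} \<subseteq> A" "measure (M n) A \<le> e"
      using K by auto
    have bound: "\<bar>Y n \<omega>\<bar> \<le> C * K' * (a n * b n)" if "\<omega> \<in> space (M n)" "\<omega> \<notin> A" for \<omega>
    proof -
      have "\<bar>X n \<omega>\<bar> \<le> K' * a n"
        using A(2) that a(2)[of n] mult_right_mono[of K K' "a n"] by (force simp: K'_def)
      then have "C * \<bar>X n \<omega>\<bar> * b n \<le> C * (K' * a n) * b n"
        using assms(5,6) by (intro mult_right_mono mult_left_mono) auto
      then show ?thesis using Y[OF that(1)] \<open>\<bar>X n \<omega>\<bar> \<le> K' * a n\<close> N'[of n] n by (simp add: ac_simps)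
    qed
    have "{\<omega> \<in> space (M n). \<bar>Y n \<omega>\<bar> > C * K' * (a n * b n)} \<subseteq> A"
      using bound by (auto simp: not_le[symmetric])
    then show "\<exists>A\<in>sets (M n). {\<omega> \<in> space (M n). \<bar>Y n \<omega>\<bar> > C * K' * (a n * b n)} \<subseteq> A
        \<and> measure (M n) A \<le> e"
      using A(1,3) by blast
  qed
qed

theorem theorem1:
  fixes M :: "nat \<Rightarrow> 'w measure"
    and p :: "nat \<Rightarrow> nat"
    and mu1 mu2 :: "nat \<Rightarrow> nat \<Rightarrow> real"
    and Sigma :: "nat \<Rightarrow> nat \<Rightarrow> nat \<Rightarrow> real"
    and c :: "nat \<Rightarrow> real"
    and \<epsilon> :: real
    and P1 P2 :: "nat \<Rightarrow> (nat \<Rightarrow> real) measure"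
    and mu1h mu2h :: "nat \<Rightarrow> 'w \<Rightarrow> nat \<Rightarrow> real"
    and Sigmah :: "nat \<Rightarrow> 'w \<Rightarrow> nat \<Rightarrow> nat \<Rightarrow> real"
    and a :: "nat \<Rightarrow> real"
    and wc :: "nat \<Rightarrow> nat \<Rightarrow> real"
    and wh :: "nat \<Rightarrow> 'w \<Rightarrow> nat \<Rightarrow> real"
  defines "mud \<equiv> \<lambda>n j. (mu1 n j - mu2 n j) / 2"
    and "mua \<equiv> \<lambda>n j. (mu1 n j + mu2 n j) / 2"
    and "mudh \<equiv> \<lambda>n \<omega> j. (mu1h n \<omega> j - mu2h n \<omega> j) / 2"
    and "muah \<equiv> \<lambda>n \<omega> j. (mu1h n \<omega> j + mu2h n \<omega> j) / 2"
  assumes M: "\<And>n. prob_space (M n)"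
    and Sigma_pd: "\<And>n. posdef (p n) (Sigma n)"
    and P1: "\<And>n. mvnormal (p n) (mu1 n) (Sigma n) (P1 n)"
    and P2: "\<And>n. mvnormal (p n) (mu2 n) (Sigma n) (P2 n)"
    and eps: "\<epsilon> > 0"
    and mud_big: "\<And>n. vinf (p n) (mud n) > \<epsilon>"
    and c_big: "\<And>n. c n > \<epsilon> + 1 / vinf (p n) (mud n)"
    and a_pos: "\<And>n. a n > 0"
    and a_lim: "a \<longlonglongrightarrow> 0"
    and Sigma_rate: "bigOp M (\<lambda>n \<omega>. minf (p n) (\<lambda>j k. Sigmah n \<omega> j k - Sigma n j k)) a"
    and mu1_rate: "bigOp M (\<lambda>n \<omega>. vinf (p n) (\<lambda>j. mu1h n \<omega> j - mu1 n j)) a"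
    and mu2_rate: "bigOp M (\<lambda>n \<omega>. vinf (p n) (\<lambda>j. mu2h n \<omega> j - mu2 n j)) a"
    and wc_min: "\<And>n. is_minimizer (p n) (c n) (mud n) (Sigma n) (wc n)"
    and wh_min: "\<And>n \<omega>. \<omega> \<in> space (M n) \<Longrightarrow> feas (p n) (c n) (mudh n \<omega>) \<noteq> {} \<Longrightarrow>
                   is_minimizer (p n) (c n) (mudh n \<omega>) (Sigmah n \<omega>) (wh n \<omega>)"
  shows "bigOp M
           (\<lambda>n \<omega>. misrate (P1 n) (P2 n) (linrule (p n) (wh n \<omega>) (muah n \<omega>))
                  - misrate (P1 n) (P2 n) (linrule (p n) (wc n) (mua n)))
           (\<lambda>n. (c n)\<^sup>2 * a n * (1 + (c n)\<^sup>2 * minf (p n) (Sigma n)))"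
proof -
  note defs = assms(1-4)
  define err where "err = (\<lambda>n \<omega>. \<bar>minf (p n) (\<lambda>j k. Sigmah n \<omega> j k - Sigma n j k)\<bar>
    + \<bar>vinf (p n) (\<lambda>j. mu1h n \<omega> j - mu1 n j)\<bar> + \<bar>vinf (p n) (\<lambda>j. mu2h n \<omega> j - mu2 n j)\<bar>)"
  have "bigOp M err a"
    using bigOp_abs_add[OF bigOp_abs_add[OF Sigma_rate mu1_rate] mu2_rate]
    by (simp add: err_def)
  then have "bigOp M
      (\<lambda>n \<omega>. misrate (P1 n) (P2 n) (linrule (p n) (wh n \<omega>) (muah n \<omega>))
           - misrate (P1 n) (P2 n) (linrule (p n) (wc n) (mua n)))
      (\<lambda>n. a n * ((c n)\<^sup>2 * (1 + (c n)\<^sup>2 * minf (p n) (Sigma n))))"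
  proof (rule bigOp_locally_linear[OF _ a_lim less_imp_le[OF a_pos]])
    show "min (\<epsilon> / 2) (\<epsilon> ^ 3 / 4) > 0" "16 + 112 / \<epsilon> \<ge> 0" using eps by auto
  next
    fix n \<omega> assume \<omega>: "\<omega> \<in> space (M n)" and err: "\<bar>err n \<omega>\<bar> \<le> min (\<epsilon> / 2) (\<epsilon> ^ 3 / 4)"
    have "err n \<omega> \<ge> 0" by (simp add: err_def)
    then show "\<bar>misrate (P1 n) (P2 n) (linrule (p n) (wh n \<omega>) (muah n \<omega>))
           - misrate (P1 n) (P2 n) (linrule (p n) (wc n) (mua n))\<bar>
        \<le> (16 + 112 / \<epsilon>) * \<bar>err n \<omega>\<bar> * ((c n)\<^sup>2 * (1 + (c n)\<^sup>2 * minf (p n) (Sigma n)))"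
      unfolding defs using err
      by (intro abs_misrate_diff_le[OF Sigma_pd P1 P2 eps mud_big[unfolded defs] c_big[unfolded defs]
            wc_min[unfolded defs] wh_min[OF \<omega>, unfolded defs]])
        (auto simp: err_def intro: order_trans[OF abs_le_vinf] order_trans[OF abs_le_minf])
  qed (simp add: minf_nonneg)
  then show ?thesis by (simp add: ac_simps)
qed

end
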